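(* Let $A\subseteq[n]$ be nonempty. There is a bijection $\rho$ from the set of rooted trees on $A$ in which $\max(A)$ is a leaf to the set of ordered forests on $A\setminus\{\max(A)\}$.
   Context: A rooted tree on a finite set $A$ is a tree with vertex set $A$ and a distinguished vertex (the root); a leaf is a vertex with no children (children being taken with respect to the root). An ordered forest on a finite set $X$ is a tuple of rooted trees whose vertex sets form a partition of $X$ (the empty tuple when $X=\emptyset$). *)

theory Defs
  imports Main
begin

definition adj :: "'a set set \<Rightarrow> 'a \<Rightarrow> 'a \<Rightarrow> bool" where
  "adj E x y \<longleftrightarrow> {x, y} \<in> E \<and> x \<noteq> y"

definition graph_on :: "'a set \<Rightarrow> 'a set set \<Rightarrow> bool" where
  "graph_on V E \<longleftrightarrow> (\<forall>e\<in>E. \<exists>x y. x \<in> V \<and> y \<in> V \<and> x \<noteq> y \<and> e = {x, y})"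

definition connected_in :: "'a set \<Rightarrow> 'a set set \<Rightarrow> 'a \<Rightarrow> 'a \<Rightarrow> bool" where
  "connected_in V E x y \<longleftrightarrow> (x, y) \<in> {(u, v). u \<in> V \<and> v \<in> V \<and> adj E u v}\<^sup>*"

definition connected_graph :: "'a set \<Rightarrow> 'a set set \<Rightarrow> bool" where
  "connected_graph V E \<longleftrightarrow> (\<forall>x\<in>V. \<forall>y\<in>V. connected_in V E x y)"

definition is_cycle :: "'a set set \<Rightarrow> 'a list \<Rightarrow> bool" where
  "is_cycle E vs \<longleftrightarrow> length vs \<ge> 3 \<and> distinct vs \<and>
     (\<forall>i. Suc i < length vs \<longrightarrow> adj E (vs ! i) (vs ! Suc i)) \<and>
     adj E (last vs) (hd vs)"

definition acyclic_graph :: "'a set set \<Rightarrow> bool" where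
  "acyclic_graph E \<longleftrightarrow> \<not> (\<exists>vs. is_cycle E vs)"

definition is_tree :: "'a set \<Rightarrow> 'a set set \<Rightarrow> bool" where
  "is_tree V E \<longleftrightarrow> finite V \<and> V \<noteq> {} \<and> graph_on V E \<and> connected_graph V E \<and> acyclic_graph E"

definition rooted_tree :: "'a set \<Rightarrow> 'a \<Rightarrow> 'a set set \<Rightarrow> bool" where
  "rooted_tree V r E \<longleftrightarrow> is_tree V E \<and> r \<in> V"

text \<open>u is a child of v (w.r.t. root r): u and v are adjacent and v is the parent of u,
  i.e. after deleting the edge {u,v}, u is no longer connected to the root.\<close>
definition is_child :: "'a set \<Rightarrow> 'a \<Rightarrow> 'a set set \<Rightarrow> 'a \<Rightarrow> 'a \<Rightarrow> bool" where
  "is_child V r E u v \<longleftrightarrow> adj E u v \<and> \<not> connected_in V (E - {{u, v}}) u r"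

definition is_leaf :: "'a set \<Rightarrow> 'a \<Rightarrow> 'a set set \<Rightarrow> 'a \<Rightarrow> bool" where
  "is_leaf V r E v \<longleftrightarrow> v \<in> V \<and> \<not> (\<exists>u\<in>V. is_child V r E u v)"

definition rooted_trees_leaf :: "'a set \<Rightarrow> 'a \<Rightarrow> ('a \<times> 'a set set) set" where
  "rooted_trees_leaf A a = {(r, E). rooted_tree A r E \<and> is_leaf A r E a}"

definition ordered_forest :: "'a set \<Rightarrow> ('a set \<times> 'a \<times> 'a set set) list \<Rightarrow> bool" where
  "ordered_forest X F \<longleftrightarrow>
     (\<forall>(V, r, E) \<in> set F. rooted_tree V r E) \<and>
     (\<forall>i j. i < length F \<longrightarrow> j < length F \<longrightarrow> i \<noteq> j \<longrightarrow> fst (F ! i) \<inter> fst (F ! j) = {}) \<and>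
     (\<Union>T\<in>set F. fst T) = X"

definition ordered_forests :: "'a set \<Rightarrow> ('a set \<times> 'a \<times> 'a set set) list set" where
  "ordered_forests X = {F. ordered_forest X F}"

end

theory Submission
  imports Defs "HOL-Library.Transitive_Closure_Table"
begin

text \<open>Call \<open>(r, p, E)\<close> a doubly rooted tree on \<open>X\<close> if \<open>(X, E)\<close> is a tree rooted at \<open>r\<close> and
  \<open>p \<in> X\<close> is a second marked vertex. If \<open>r \<noteq> p\<close>, cutting the first edge on the path from \<open>r\<close> to \<open>p\<close>
  gives \<open>D(X) = T(X) + \<Sum> T(V) D(X - V)\<close> over \<open>{} \<noteq> V \<subset> X\<close>, where \<open>T\<close> counts rooted trees and
  \<open>D\<close> doubly rooted trees. Removing the first tree of an ordered forest gives
  \<open>F(X) = \<Sum> T(V) F(X - V)\<close> over \<open>{} \<noteq> V \<subseteq> X\<close> with \<open>F({}) = 1\<close>, the same recurrence once \<open>D({})\<close>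
  is read as \<open>1\<close>; so \<open>F(X) = D(X)\<close> for \<open>X \<noteq> {}\<close>. Finally, the trees on \<open>A\<close> in which \<open>a\<close> is a leaf
  are exactly the doubly rooted trees on \<open>A - {a}\<close> with \<open>a\<close> attached to the marked vertex, so both
  sets in the theorem have the same finite cardinality.\<close>

section \<open>Connectivity\<close>

abbreviation component :: "'a set \<Rightarrow> 'a set set \<Rightarrow> 'a \<Rightarrow> 'a set" where
  "component V E x \<equiv> {w\<in>V. connected_in V E x w}"

abbreviation induced_edges :: "'a set set \<Rightarrow> 'a set \<Rightarrow> 'a set set" where
  "induced_edges E C \<equiv> {f\<in>E. f \<subseteq> C}"

lemma adj_commute: "adj E x y \<Longrightarrow> adj E y x"
  unfolding adj_def by (auto simp: insert_commute)

lemma adj_mono: "adj E x y \<Longrightarrow> E \<subseteq> E' \<Longrightarrow> adj E' x y"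
  unfolding adj_def by auto

lemma connected_in_refl [simp]: "connected_in V E x x"
  unfolding connected_in_def by simp

lemma connected_in_mono:
  "connected_in V E x y \<Longrightarrow> V \<subseteq> V' \<Longrightarrow> E \<subseteq> E' \<Longrightarrow> connected_in V' E' x y"
  unfolding connected_in_def
  by (erule rtrancl_mono[THEN subsetD, rotated]) (auto intro: adj_mono)

lemma connected_in_step:
  "connected_in V E x y \<Longrightarrow> y \<in> V \<Longrightarrow> z \<in> V \<Longrightarrow> adj E y z \<Longrightarrow> connected_in V E x z"
  unfolding connected_in_def by (erule rtrancl_into_rtrancl) auto

lemma connected_in_adj: "x \<in> V \<Longrightarrow> y \<in> V \<Longrightarrow> adj E x y \<Longrightarrow> connected_in V E x y"
  using connected_in_step[of V E x x y] by simp

lemma connected_in_trans: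
  "connected_in V E x y \<Longrightarrow> connected_in V E y z \<Longrightarrow> connected_in V E x z"
  unfolding connected_in_def by (rule rtrancl_trans)

lemma connected_in_sym: "connected_in V E x y \<Longrightarrow> connected_in V E y x"
  unfolding connected_in_def
proof (induction rule: rtrancl_induct)
  case (step b c)
  then have "(c, b) \<in> {(u, v). u \<in> V \<and> v \<in> V \<and> adj E u v}" by (auto intro: adj_commute)
  then show ?case using step(3) by (rule converse_rtrancl_into_rtrancl)
qed simp

lemma connected_in_first_edge: "connected_in V E x y \<Longrightarrow> x \<noteq> y \<Longrightarrow> \<exists>q\<in>V. adj E x q"
  unfolding connected_in_def by (erule converse_rtranclE) auto

lemma component_without_only_edge:
  assumes "x \<in> V" and only: "\<And>q. adj E x q \<Longrightarrow> q = p"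
  shows "component V (E - {{x, p}}) x = {x}"
proof (rule ccontr)
  assume "component V (E - {{x, p}}) x \<noteq> {x}"
  moreover have "x \<in> component V (E - {{x, p}}) x" using assms(1) by simp
  ultimately obtain w where w: "connected_in V (E - {{x, p}}) x w" "x \<noteq> w" by blast
  obtain q where "adj (E - {{x, p}}) x q" using connected_in_first_edge[OF w] by blast
  then show False using only[of q] by (auto simp: adj_def)
qed

lemma connected_in_component:
  assumes "connected_in V E x y"
  shows "connected_in (component V E x) (induced_edges E (component V E x)) x y"
  using assms unfolding connected_in_def
proof (induction rule: rtrancl_induct)
  case (step b c)
  let ?C = "{w\<in>V. (x, w) \<in> {(u, v). u \<in> V \<and> v \<in> V \<and> adj E u v}\<^sup>*}"
  have bc: "b \<in> ?C" "c \<in> ?C" using step by (auto intro: rtrancl_into_rtrancl)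
  have "{b, c} \<in> E" using step by (auto simp: adj_def)
  then have "adj (induced_edges E ?C) b c" using step bc by (auto simp: adj_def)
  then show ?case using step bc unfolding connected_in_def
    by (auto elim!: rtrancl_into_rtrancl)
qed simp

lemma graph_on_edgeE:
  assumes "graph_on V E" and "f \<in> E"
  obtains x y where "x \<in> V" "y \<in> V" "x \<noteq> y" "f = {x, y}"
  using assms unfolding graph_on_def by blast

lemma graph_on_edge_subset:
  assumes "graph_on V E" and "f \<in> E"
  shows "f \<subseteq> V"
  using graph_on_edgeE[OF assms] by blast

lemma graph_on_adj: "graph_on V E \<Longrightarrow> adj E x y \<Longrightarrow> x \<in> V \<and> y \<in> V"
  using graph_on_edge_subset[of V E "{x, y}"] unfolding adj_def by simp

lemma graph_on_induced_edges:
  assumes "graph_on V E"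
  shows "graph_on C (induced_edges E C)"
  unfolding graph_on_def
proof
  fix f assume f: "f \<in> induced_edges E C"
  then obtain x y where "x \<noteq> y" "f = {x, y}" using graph_on_edgeE[OF assms] by blast
  with f show "\<exists>x y. x \<in> C \<and> y \<in> C \<and> x \<noteq> y \<and> f = {x, y}" by blast
qed

lemma connected_in_disjoint_union:
  assumes g1: "graph_on V1 E1" and g2: "graph_on V2 E2" and disj: "V1 \<inter> V2 = {}"
    and conn: "connected_in V (E1 \<union> E2) x y" and x: "x \<in> V1"
  shows "y \<in> V1"
  using conn x unfolding connected_in_def
proof (induction rule: rtrancl_induct)
  case (step b c)
  then have b: "b \<in> V1" and bc: "adj (E1 \<union> E2) b c" by auto
  show ?case
  proof (cases "{b, c} \<in> E1")
    case True
    then show ?thesis using graph_on_adj[OF g1, of b c] bc by (auto simp: adj_def)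
  next
    case False
    then have "adj E2 b c" using bc by (auto simp: adj_def)
    then show ?thesis using graph_on_adj[OF g2, of b c] b disj by auto
  qed
qed simp

lemma is_tree_connected_in: "is_tree V E \<Longrightarrow> x \<in> V \<Longrightarrow> y \<in> V \<Longrightarrow> connected_in V E x y"
  unfolding is_tree_def connected_graph_def by blast

lemma is_tree_graph_on: "is_tree V E \<Longrightarrow> graph_on V E"
  unfolding is_tree_def by blast

lemma acyclic_graph_mono: "acyclic_graph E \<Longrightarrow> E' \<subseteq> E \<Longrightarrow> acyclic_graph E'"
  unfolding acyclic_graph_def is_cycle_def by (meson adj_mono)

section \<open>Acyclic graphs are those in which every edge is a bridge\<close>

definition all_bridges :: "'a set \<Rightarrow> 'a set set \<Rightarrow> bool" where
  "all_bridges V E \<longleftrightarrow> (\<forall>u v. adj E u v \<longrightarrow> \<not> connected_in V (E - {{u, v}}) u v)"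

lemma rtrancl_path_nth:
  "rtrancl_path r x xs y \<Longrightarrow> Suc i < length (x # xs) \<Longrightarrow> r ((x # xs) ! i) ((x # xs) ! Suc i)"
proof (induction arbitrary: i rule: rtrancl_path.induct)
  case (step x y ys z)
  then show ?case by (cases i) auto
qed simp

lemma rtrancl_path_last: "rtrancl_path r x xs y \<Longrightarrow> last (x # xs) = y"
  by (induction rule: rtrancl_path.induct) auto

text \<open>A path avoiding the edge \<open>{u, v}\<close> can be taken simple; closed up by that edge it is a
  cycle, since a path of length one would have to use \<open>{u, v}\<close> itself.\<close>
lemma acyclic_graph_all_bridges:
  assumes "acyclic_graph E"
  shows "all_bridges V E"
  unfolding all_bridges_def
proof (intro allI impI notI)
  fix u v assume uv: "adj E u v" and conn: "connected_in V (E - {{u, v}}) u v"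
  let ?R = "\<lambda>x y. (x, y) \<in> {(x', y'). x' \<in> V \<and> y' \<in> V \<and> adj (E - {{u, v}}) x' y'}"
  from conn have "?R\<^sup>*\<^sup>* u v" unfolding connected_in_def by (simp add: rtranclp_rtrancl_eq)
  then obtain xs where "rtrancl_path ?R u xs v" by (auto simp: rtranclp_eq_rtrancl_path)
  then obtain ys where p: "rtrancl_path ?R u ys v" and d: "distinct (u # ys)"
    by (rule rtrancl_path_distinct)
  have last: "last (u # ys) = v" using rtrancl_path_last[OF p] .
  have steps: "adj (E - {{u, v}}) ((u # ys) ! i) ((u # ys) ! Suc i)" if "Suc i < length (u # ys)" for i
    using rtrancl_path_nth[OF p that] by auto
  have "length ys \<noteq> 0" using last uv by (auto simp: adj_def)
  moreover have "length ys \<noteq> 1"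
  proof
    assume "length ys = 1"
    then obtain w where "ys = [w]" by (cases ys) auto
    then show False using steps[of 0] last by (auto simp: adj_def)
  qed
  ultimately have "length (u # ys) \<ge> 3" by (simp only: length_Cons)
  moreover have "adj E (last (u # ys)) (hd (u # ys))" using last uv by (simp add: adj_commute)
  moreover have "\<forall>i. Suc i < length (u # ys) \<longrightarrow> adj E ((u # ys) ! i) ((u # ys) ! Suc i)"
    using steps by (meson Diff_subset adj_mono)
  ultimately have "is_cycle E (u # ys)" using d unfolding is_cycle_def by blast
  then show False using assms unfolding acyclic_graph_def by blast
qed

text \<open>Conversely, the cycle minus its closing edge \<open>{x, y}\<close> still connects \<open>y\<close> to \<open>x\<close>.\<close>
lemma all_bridges_acyclic_graph:
  assumes g: "graph_on V E" and b: "all_bridges V E"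
  shows "acyclic_graph E"
  unfolding acyclic_graph_def
proof
  assume "\<exists>vs. is_cycle E vs"
  then obtain vs where c: "is_cycle E vs" by blast
  define n where "n = length vs"
  define x where "x = vs ! (n - 1)"
  define y where "y = vs ! 0"
  have "vs \<noteq> []" using c unfolding is_cycle_def by auto
  then have n3: "n \<ge> 3" and d: "distinct vs" and st: "\<And>i. Suc i < n \<Longrightarrow> adj E (vs ! i) (vs ! Suc i)"
    and xy: "adj E x y"
    using c unfolding is_cycle_def n_def x_def y_def by (auto simp: last_conv_nth hd_conv_nth)
  have "connected_in V (E - {{x, y}}) y (vs ! k)" if "k < n" for k
    using that
  proof (induction k)
    case 0
    then show ?case by (simp add: y_def)
  next
    case (Suc k)
    have a: "adj E (vs ! k) (vs ! Suc k)" using st Suc by simp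
    have "{vs ! k, vs ! Suc k} \<noteq> {x, y}"
    proof
      assume "{vs ! k, vs ! Suc k} = {x, y}"
      then have "(vs ! k = x \<and> vs ! Suc k = y) \<or> (vs ! k = y \<and> vs ! Suc k = x)"
        by (auto simp: doubleton_eq_iff)
      moreover have "vs ! i = vs ! j \<longleftrightarrow> i = j" if "i < n" "j < n" for i j
        using d that unfolding n_def by (simp add: nth_eq_iff_index_eq)
      ultimately show False using Suc.prems n3 unfolding x_def y_def by auto
    qed
    then have "adj (E - {{x, y}}) (vs ! k) (vs ! Suc k)" using a by (auto simp: adj_def)
    moreover have "vs ! k \<in> V" "vs ! Suc k \<in> V" using graph_on_adj[OF g a] by auto
    ultimately show ?case using Suc by (auto intro: connected_in_step)
  qed
  from this[of "n - 1"] n3 have "connected_in V (E - {{x, y}}) x y"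
    by (simp add: x_def connected_in_sym)
  then show False using b xy unfolding all_bridges_def by blast
qed

lemma is_tree_all_bridges: "is_tree V E \<Longrightarrow> all_bridges V E"
  unfolding is_tree_def using acyclic_graph_all_bridges by blast

lemma is_tree_edge_bridge:
  "is_tree V E \<Longrightarrow> adj E u v \<Longrightarrow> \<not> connected_in V (E - {{u, v}}) u v"
  using is_tree_all_bridges unfolding all_bridges_def by blast

section \<open>Joining and splitting trees\<close>

text \<open>Collapsing \<open>V2\<close> onto \<open>x\<close> turns a walk in the joined graph into a walk in \<open>(V1, E1)\<close>
  avoiding the same edges of \<open>E1\<close>.\<close>
lemma join_trees_keeps_bridge:
  assumes t1: "is_tree V1 E1" and t2: "is_tree V2 E2" and disj: "V1 \<inter> V2 = {}"
    and x: "x \<in> V1" and y: "y \<in> V2" and uv: "adj E1 u v"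
  shows "\<not> connected_in (V1 \<union> V2) (E1 \<union> E2 \<union> {{x, y}} - {{u, v}}) u v"
proof
  assume conn: "connected_in (V1 \<union> V2) (E1 \<union> E2 \<union> {{x, y}} - {{u, v}}) u v"
  have g1: "graph_on V1 E1" and g2: "graph_on V2 E2" using t1 t2 by (auto simp: is_tree_graph_on)
  define \<phi> where "\<phi> w = (if w \<in> V1 then w else x)" for w
  have "(\<phi> a, \<phi> b) \<in> {(a', b'). a' \<in> V1 \<and> b' \<in> V1 \<and> adj (E1 - {{u, v}}) a' b'}\<^sup>*"
    if "(a, b) \<in> {(a', b'). a' \<in> V1 \<union> V2 \<and> b' \<in> V1 \<union> V2 \<and>
                            adj (E1 \<union> E2 \<union> {{x, y}} - {{u, v}}) a' b'}\<^sup>*" for a b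
    using that
  proof (induction rule: rtrancl_induct)
    case (step b c)
    then have bc: "adj (E1 \<union> E2 \<union> {{x, y}} - {{u, v}}) b c" by auto
    then consider "{b, c} \<in> E1 - {{u, v}}" | "{b, c} \<in> E2" | "{b, c} = {x, y}"
      by (auto simp: adj_def)
    then have "(\<phi> b, \<phi> c) \<in> {(a', b'). a' \<in> V1 \<and> b' \<in> V1 \<and> adj (E1 - {{u, v}}) a' b'}\<^sup>="
    proof cases
      case 1
      then have "b \<in> V1" "c \<in> V1" using graph_on_adj[OF g1, of b c] bc by (auto simp: adj_def)
      then show ?thesis using 1 bc by (auto simp: \<phi>_def adj_def)
    next
      case 2
      then have "b \<in> V2" "c \<in> V2" using graph_on_adj[OF g2, of b c] bc by (auto simp: adj_def)
      then show ?thesis using disj by (auto simp: \<phi>_def)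
    next
      case 3
      then show ?thesis using x y disj by (auto simp: \<phi>_def doubleton_eq_iff)
    qed
    then show ?case using step.IH by (auto elim: rtrancl_into_rtrancl)
  qed simp
  moreover have "u \<in> V1" "v \<in> V1" using graph_on_adj[OF g1 uv] by auto
  ultimately have "connected_in V1 (E1 - {{u, v}}) u v"
    using conn unfolding connected_in_def by (fastforce simp: \<phi>_def)
  then show False using is_tree_edge_bridge[OF t1 uv] by blast
qed

lemma graph_on_join:
  assumes g1: "graph_on V1 E1" and g2: "graph_on V2 E2"
    and x: "x \<in> V1" and y: "y \<in> V2" and xy: "x \<noteq> y"
  shows "graph_on (V1 \<union> V2) (E1 \<union> E2 \<union> {{x, y}})"
  unfolding graph_on_def
proof
  fix f assume "f \<in> E1 \<union> E2 \<union> {{x, y}}"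
  then consider "f \<in> E1" | "f \<in> E2" | "f = {x, y}" by blast
  then show "\<exists>a b. a \<in> V1 \<union> V2 \<and> b \<in> V1 \<union> V2 \<and> a \<noteq> b \<and> f = {a, b}"
  proof cases
    case 1
    then show ?thesis using graph_on_edgeE[OF g1] by (metis UnI1)
  next
    case 2
    then show ?thesis using graph_on_edgeE[OF g2] by (metis UnI2)
  next
    case 3
    then show ?thesis using x y xy by blast
  qed
qed

lemma connected_graph_join:
  assumes t1: "is_tree V1 E1" and t2: "is_tree V2 E2"
    and x: "x \<in> V1" and y: "y \<in> V2" and xy: "x \<noteq> y"
  shows "connected_graph (V1 \<union> V2) (E1 \<union> E2 \<union> {{x, y}})"
proof -
  let ?V = "V1 \<union> V2" and ?E = "E1 \<union> E2 \<union> {{x, y}}"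
  have to_x: "connected_in ?V ?E w x" if w: "w \<in> ?V" for w
  proof (cases "w \<in> V1")
    case True
    then have "connected_in V1 E1 w x" using is_tree_connected_in[OF t1 _ x] by blast
    then show ?thesis by (rule connected_in_mono) auto
  next
    case False
    then have "connected_in V2 E2 w y" using is_tree_connected_in[OF t2 _ y] w by blast
    then have "connected_in ?V ?E w y" by (rule connected_in_mono) auto
    moreover have "adj ?E y x" using xy by (auto simp: adj_def insert_commute)
    ultimately show ?thesis using x y by (auto intro: connected_in_step)
  qed
  then show ?thesis
    unfolding connected_graph_def using connected_in_trans[OF to_x connected_in_sym[OF to_x]] by blast
qed

lemma all_bridges_join:
  assumes t1: "is_tree V1 E1" and t2: "is_tree V2 E2" and disj: "V1 \<inter> V2 = {}"
    and x: "x \<in> V1" and y: "y \<in> V2"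
  shows "all_bridges (V1 \<union> V2) (E1 \<union> E2 \<union> {{x, y}})"
  unfolding all_bridges_def
proof (intro allI impI)
  let ?V = "V1 \<union> V2" and ?E = "E1 \<union> E2 \<union> {{x, y}}"
  have g1: "graph_on V1 E1" and g2: "graph_on V2 E2" using t1 t2 by (auto simp: is_tree_graph_on)
  fix u v assume uv: "adj ?E u v"
  then consider "adj E1 u v" | "adj E2 u v" | "{u, v} = {x, y}" by (auto simp: adj_def)
  then show "\<not> connected_in ?V (?E - {{u, v}}) u v"
  proof cases
    case 1
    then show ?thesis using join_trees_keeps_bridge[OF t1 t2 disj x y] by blast
  next
    case 2
    have "V2 \<union> V1 = ?V" "E2 \<union> E1 \<union> {{y, x}} = ?E" by (auto simp: insert_commute)
    moreover have "V2 \<inter> V1 = {}" using disj by auto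
    ultimately show ?thesis using join_trees_keeps_bridge[OF t2 t1 _ y x 2] by simp
  next
    case 3
    have "y \<notin> V1" using y disj by blast
    then have "{x, y} \<notin> E1" using graph_on_edge_subset[OF g1, of "{x, y}"] by blast
    moreover have "{x, y} \<notin> E2" using graph_on_edge_subset[OF g2, of "{x, y}"] x disj by blast
    ultimately have "?E - {{u, v}} = E1 \<union> E2" using 3 by auto
    moreover have "\<not> connected_in ?V (E1 \<union> E2) x y"
      using connected_in_disjoint_union[OF g1 g2 disj _ x] \<open>y \<notin> V1\<close> by blast
    moreover have "(u = x \<and> v = y) \<or> (u = y \<and> v = x)" using 3 by (auto simp: doubleton_eq_iff)
    ultimately show ?thesis by (auto dest: connected_in_sym)
  qed
qed

lemma is_tree_join:
  assumes t1: "is_tree V1 E1" and t2: "is_tree V2 E2" and disj: "V1 \<inter> V2 = {}"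
    and x: "x \<in> V1" and y: "y \<in> V2"
  shows "is_tree (V1 \<union> V2) (E1 \<union> E2 \<union> {{x, y}})"
proof -
  have xy: "x \<noteq> y" using x y disj by auto
  have g: "graph_on (V1 \<union> V2) (E1 \<union> E2 \<union> {{x, y}})"
    using graph_on_join[OF is_tree_graph_on[OF t1] is_tree_graph_on[OF t2] x y xy] .
  then show ?thesis
    using t1 t2 connected_graph_join[OF t1 t2 x y xy]
      all_bridges_acyclic_graph[OF g all_bridges_join[OF t1 t2 disj x y]]
    by (simp add: is_tree_def)
qed

lemma is_tree_singleton: "is_tree {a} {}"
  unfolding is_tree_def graph_on_def connected_graph_def acyclic_graph_def is_cycle_def adj_def
  by simp

text \<open>Follow a walk from \<open>w\<close> to \<open>r\<close>; its last edge \<open>{r, v}\<close> is a bridge separating \<open>w\<close> from \<open>r\<close>.\<close>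
lemma exists_separating_edge:
  assumes t: "is_tree X E" and conn: "connected_in X E w r" and wr: "w \<noteq> r"
  shows "\<exists>v. adj E r v \<and> \<not> connected_in X (E - {{r, v}}) w r"
proof -
  have "(w, r) \<in> {(a, b). a \<in> X \<and> b \<in> X \<and> adj E a b}\<^sup>*"
    using conn unfolding connected_in_def .
  then show ?thesis using wr
  proof (induction rule: converse_rtrancl_induct)
    case (step w w')
    have ww': "w \<in> X" "w' \<in> X" "adj E w w'" using step.hyps(1) by auto
    show ?case
    proof (cases "w' = r")
      case True
      have "{w, r} = {r, w}" by blast
      then have "\<not> connected_in X (E - {{r, w}}) w r"
        using is_tree_edge_bridge[OF t ww'(3)] True by simp
      then show ?thesis using adj_commute[OF ww'(3)] True by blast
    next
      case False
      then obtain v where v: "adj E r v" "\<not> connected_in X (E - {{r, v}}) w' r"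
        using step.IH by blast
      have "\<not> connected_in X (E - {{r, v}}) w r"
      proof
        assume wr': "connected_in X (E - {{r, v}}) w r"
        have "{w, w'} \<noteq> {r, v}" using step.prems False by (auto simp: doubleton_eq_iff)
        then have "adj (E - {{r, v}}) w' w" using ww' by (auto simp: adj_def insert_commute)
        then have "connected_in X (E - {{r, v}}) w' w" using ww' by (simp add: connected_in_adj)
        then have "connected_in X (E - {{r, v}}) w' r" using wr' by (rule connected_in_trans)
        then show False using v(2) by blast
      qed
      then show ?thesis using v by blast
    qed
  qed simp
qed

context
  fixes X E u v
  assumes tree: "is_tree X E" and edge: "adj E u v"
begin

lemma split_tree_components_cover:
  assumes "w \<in> X"
  shows "connected_in X (E - {{u, v}}) u w \<or> connected_in X (E - {{u, v}}) v w"
proof -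
  have "u \<in> X" using graph_on_adj[OF is_tree_graph_on[OF tree] edge] by blast
  then have "(u, w) \<in> {(a, b). a \<in> X \<and> b \<in> X \<and> adj E a b}\<^sup>*"
    using is_tree_connected_in[OF tree _ assms] unfolding connected_in_def by blast
  then show ?thesis
  proof (induction rule: rtrancl_induct)
    case (step b c)
    then have bc: "b \<in> X" "c \<in> X" "adj E b c" by auto
    show ?case
    proof (cases "{b, c} = {u, v}")
      case True
      then have "c = u \<or> c = v" by (auto simp: doubleton_eq_iff)
      then show ?thesis by auto
    next
      case False
      then have "adj (E - {{u, v}}) b c" using bc by (auto simp: adj_def)
      then show ?thesis using step.IH connected_in_step[OF _ bc(1,2)] by blast
    qed
  qed simp
qed

lemma split_tree_components_disjoint:
  assumes "connected_in X (E - {{u, v}}) u w"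
  shows "\<not> connected_in X (E - {{u, v}}) v w"
proof
  assume "connected_in X (E - {{u, v}}) v w"
  then have "connected_in X (E - {{u, v}}) u v"
    using assms connected_in_sym connected_in_trans by metis
  then show False using is_tree_edge_bridge[OF tree edge] by blast
qed

lemma split_tree_components_complement:
  "X - component X (E - {{u, v}}) u = component X (E - {{u, v}}) v"
proof (intro equalityI subsetI)
  fix w assume "w \<in> X - component X (E - {{u, v}}) u"
  then show "w \<in> component X (E - {{u, v}}) v"
    using split_tree_components_cover[of w] by blast
next
  fix w assume "w \<in> component X (E - {{u, v}}) v"
  then show "w \<in> X - component X (E - {{u, v}}) u"
    using split_tree_components_disjoint[of w] by blast
qed

lemma split_tree_edges:
  "E = induced_edges E (component X (E - {{u, v}}) u) \<union>
       induced_edges E (component X (E - {{u, v}}) v) \<union> {{u, v}}"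
proof -
  have "f \<subseteq> component X (E - {{u, v}}) u \<or> f \<subseteq> component X (E - {{u, v}}) v"
    if f: "f \<in> E" "f \<noteq> {u, v}" for f
  proof -
    obtain a b where ab: "a \<in> X" "b \<in> X" "a \<noteq> b" "f = {a, b}"
      using graph_on_edgeE[OF is_tree_graph_on[OF tree] f(1)] by blast
    then have ab_adj: "adj (E - {{u, v}}) a b" using f by (auto simp: adj_def)
    have "connected_in X (E - {{u, v}}) c b" if "connected_in X (E - {{u, v}}) c a" for c
      using connected_in_step[OF that ab(1,2) ab_adj] .
    then show ?thesis using split_tree_components_cover[OF ab(1)] ab by blast
  qed
  moreover have "{u, v} \<in> E" using edge by (simp add: adj_def)
  ultimately show ?thesis by blast
qed

lemma is_tree_split_component:
  "is_tree (component X (E - {{u, v}}) u) (induced_edges E (component X (E - {{u, v}}) u))"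
proof -
  define C where "C = component X (E - {{u, v}}) u"
  have "u \<in> X" using graph_on_adj[OF is_tree_graph_on[OF tree] edge] by blast
  then have "u \<in> C" unfolding C_def by simp
  have to_u: "connected_in C (induced_edges E C) u w" if "w \<in> C" for w
  proof -
    have "connected_in X (E - {{u, v}}) u w" using that unfolding C_def by simp
    from connected_in_component[OF this]
    have "connected_in C (induced_edges (E - {{u, v}}) C) u w" unfolding C_def .
    then show ?thesis by (rule connected_in_mono) auto
  qed
  have "finite C" using tree unfolding is_tree_def C_def by simp
  moreover have "graph_on C (induced_edges E C)"
    using graph_on_induced_edges[OF is_tree_graph_on[OF tree]] .
  moreover have "connected_graph C (induced_edges E C)"
    unfolding connected_graph_def using connected_in_trans[OF connected_in_sym[OF to_u] to_u] by blast
  moreover have "acyclic_graph (induced_edges E C)"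
    using tree acyclic_graph_mono[of E "induced_edges E C"] unfolding is_tree_def by blast
  ultimately show ?thesis using \<open>u \<in> C\<close> unfolding C_def[symmetric] is_tree_def by blast
qed

end

section \<open>Counting doubly rooted trees\<close>

definition rooted_trees :: "'a set \<Rightarrow> ('a \<times> 'a set set) set" where
  "rooted_trees V = {(r, E). rooted_tree V r E}"

definition doubly_rooted_trees :: "'a set \<Rightarrow> ('a \<times> 'a \<times> 'a set set) set" where
  "doubly_rooted_trees V = {(r, p, E). rooted_tree V r E \<and> p \<in> V}"

text \<open>If \<open>r \<noteq> p\<close>, cutting the first edge \<open>{r, v}\<close> of the path from \<open>r\<close> to \<open>p\<close> splits a doubly
  rooted tree into a rooted tree at \<open>r\<close> and a doubly rooted tree \<open>(v, p, _)\<close>; this map undoes the cut.\<close>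
definition link_trees ::
  "'a set \<times> ('a \<times> 'a set set) \<times> ('a \<times> 'a \<times> 'a set set) \<Rightarrow> 'a \<times> 'a \<times> 'a set set" where
  "link_trees = (\<lambda>(V, (r, E1), (v, p, E2)). (r, p, E1 \<union> E2 \<union> {{r, v}}))"

abbreviation linkable_pairs ::
  "'a set \<Rightarrow> ('a set \<times> ('a \<times> 'a set set) \<times> ('a \<times> 'a \<times> 'a set set)) set" where
  "linkable_pairs X \<equiv> SIGMA V:{V. V \<subseteq> X \<and> V \<noteq> {} \<and> V \<noteq> X}. rooted_trees V \<times> doubly_rooted_trees (X - V)"

lemma finite_rooted_trees:
  assumes "finite V"
  shows "finite (rooted_trees V)"
proof -
  have "rooted_trees V \<subseteq> V \<times> Pow (Pow V)"
    unfolding rooted_trees_def rooted_tree_def using graph_on_edge_subset is_tree_graph_on by fastforce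
  then show ?thesis by (rule finite_subset) (simp add: assms)
qed

lemma finite_doubly_rooted_trees:
  assumes "finite V"
  shows "finite (doubly_rooted_trees V)"
proof -
  have "doubly_rooted_trees V \<subseteq> V \<times> V \<times> Pow (Pow V)"
    unfolding doubly_rooted_trees_def rooted_tree_def
    using graph_on_edge_subset is_tree_graph_on by fastforce
  then show ?thesis by (rule finite_subset) (simp add: assms)
qed

lemma joined_tree_parts:
  assumes t1: "is_tree V1 E1" and t2: "is_tree V2 E2" and disj: "V1 \<inter> V2 = {}"
    and x: "x \<in> V1" and y: "y \<in> V2"
  shows "E1 \<union> E2 \<union> {{x, y}} - {{x, y}} = E1 \<union> E2"
    and "component (V1 \<union> V2) (E1 \<union> E2) x = V1"
    and "E1 = induced_edges (E1 \<union> E2 \<union> {{x, y}}) V1"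
    and "E2 = induced_edges (E1 \<union> E2 \<union> {{x, y}}) V2"
proof -
  have g1: "graph_on V1 E1" and g2: "graph_on V2 E2" using t1 t2 by (auto simp: is_tree_graph_on)
  have e1: "f \<subseteq> V1" if "f \<in> E1" for f using graph_on_edge_subset[OF g1 that] .
  have e2: "f \<subseteq> V2" if "f \<in> E2" for f using graph_on_edge_subset[OF g2 that] .
  have ne1: "\<not> f \<subseteq> V1" if f: "f \<in> E2" for f
  proof
    assume "f \<subseteq> V1"
    moreover obtain a b where "a \<in> V2" "f = {a, b}" using graph_on_edgeE[OF g2 f] by blast
    ultimately show False using disj by blast
  qed
  have ne2: "\<not> f \<subseteq> V2" if f: "f \<in> E1" for f
  proof
    assume "f \<subseteq> V2"
    moreover obtain a b where "a \<in> V1" "f = {a, b}" using graph_on_edgeE[OF g1 f] by blast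
    ultimately show False using disj by blast
  qed
  have y1: "y \<notin> V1" and x2: "x \<notin> V2" using disj x y by auto
  show "E1 \<union> E2 \<union> {{x, y}} - {{x, y}} = E1 \<union> E2" using e1 e2 x2 y1 by blast
  show "component (V1 \<union> V2) (E1 \<union> E2) x = V1"
  proof (intro equalityI subsetI)
    fix w assume "w \<in> component (V1 \<union> V2) (E1 \<union> E2) x"
    then show "w \<in> V1" using connected_in_disjoint_union[OF g1 g2 disj _ x] by blast
  next
    fix w assume w: "w \<in> V1"
    have "connected_in V1 E1 x w" using is_tree_connected_in[OF t1 x w] .
    then have "connected_in (V1 \<union> V2) (E1 \<union> E2) x w" by (rule connected_in_mono) auto
    then show "w \<in> component (V1 \<union> V2) (E1 \<union> E2) x" using w by blast
  qed
  show "E1 = induced_edges (E1 \<union> E2 \<union> {{x, y}}) V1" using e1 ne1 y1 by blast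
  show "E2 = induced_edges (E1 \<union> E2 \<union> {{x, y}}) V2" using e2 ne2 x2 by blast
qed

text \<open>The tree and both marked vertices determine the cut edge \<open>{r, v}\<close>: it is the unique edge at \<open>r\<close>
  whose removal separates \<open>r\<close> from \<open>p\<close>; then the cut determines everything else.\<close>
lemma inj_on_link_trees:
  "inj_on link_trees (linkable_pairs X)"
proof (rule inj_onI)
  fix s s' assume s: "s \<in> linkable_pairs X" and s': "s' \<in> linkable_pairs X"
    and eq: "link_trees s = link_trees s'"
  obtain V r E1 v p E2 where sd: "s = (V, (r, E1), (v, p, E2))" by (cases s) auto
  obtain V' r' E1' v' p' E2' where sd': "s' = (V', (r', E1'), (v', p', E2'))" by (cases s') auto
  have VX: "V \<subseteq> X" and t1: "is_tree V E1" and r: "r \<in> V" and t2: "is_tree (X - V) E2"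
    and v: "v \<in> X - V" and p: "p \<in> X - V"
    using s sd by (auto simp: rooted_trees_def doubly_rooted_trees_def rooted_tree_def)
  have VX': "V' \<subseteq> X" and t1': "is_tree V' E1'" and r': "r' \<in> V'" and t2': "is_tree (X - V') E2'"
    and v': "v' \<in> X - V'" and p': "p' \<in> X - V'"
    using s' sd' by (auto simp: rooted_trees_def doubly_rooted_trees_def rooted_tree_def)
  have eq': "(r, p, E1 \<union> E2 \<union> {{r, v}}) = (r', p', E1' \<union> E2' \<union> {{r', v'}})"
    using eq unfolding sd sd' link_trees_def by (simp only: prod.case)
  then have rr: "r' = r" and pp: "p' = p" by simp_all
  have EE: "E1' \<union> E2' \<union> {{r, v'}} = E1 \<union> E2 \<union> {{r, v}}" using eq' unfolding rr by simp
  define E where "E = E1 \<union> E2 \<union> {{r, v}}"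
  have un: "V \<union> (X - V) = X" and un': "V' \<union> (X - V') = X" using VX VX' by auto
  note parts = joined_tree_parts[OF t1 t2 _ r v, unfolded un, folded E_def]
  note parts' = joined_tree_parts[OF t1' t2' _ r' v', unfolded un' rr EE, folded E_def]
  have vv: "v' = v"
  proof (rule ccontr)
    assume "v' \<noteq> v"
    then have "adj (E - {{r, v'}}) r v" using r v unfolding E_def adj_def by (auto simp: doubleton_eq_iff)
    then have "connected_in X (E - {{r, v'}}) r v" using r v VX by (auto intro: connected_in_adj)
    moreover have "E2 \<subseteq> E - {{r, v'}}" using graph_on_edge_subset[OF is_tree_graph_on[OF t2], of "{r, v'}"] r
      unfolding E_def by blast
    then have "connected_in X (E - {{r, v'}}) v p"
      using connected_in_mono[OF is_tree_connected_in[OF t2 v p]] by blast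
    ultimately have "connected_in X (E - {{r, v'}}) r p" by (rule connected_in_trans)
    then show False using parts'(1,2) p' pp rr by auto
  qed
  have VV: "V' = V" using parts(1,2) parts'(1,2) unfolding vv by simp
  have "E1' = E1" "E2' = E2" using parts(3,4) parts'(3,4) unfolding VV by simp_all
  then show "s = s'" using sd sd' rr pp vv VV by simp
qed

lemma link_trees_in:
  assumes "s \<in> linkable_pairs X"
  shows "link_trees s \<in> {(r, p, E). rooted_tree X r E \<and> p \<in> X \<and> r \<noteq> p}"
proof -
  obtain V r E1 v p E2 where s: "s = (V, (r, E1), (v, p, E2))" by (cases s) auto
  from assms have VX: "V \<subseteq> X" and t1: "is_tree V E1" and r: "r \<in> V"
    and t2: "is_tree (X - V) E2" and v: "v \<in> X - V" and p: "p \<in> X - V"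
    unfolding s by (auto simp: rooted_trees_def doubly_rooted_trees_def rooted_tree_def)
  have "V \<union> (X - V) = X" using VX by auto
  then have "is_tree X (E1 \<union> E2 \<union> {{r, v}})" using is_tree_join[OF t1 t2 _ r v] by simp
  then show ?thesis using r p VX unfolding s link_trees_def rooted_tree_def by auto
qed

lemma link_trees_surj:
  assumes t: "is_tree X E" and r: "r \<in> X" and p: "p \<in> X" and rp: "r \<noteq> p"
  shows "(r, p, E) \<in> link_trees ` linkable_pairs X"
proof -
  obtain v where rv: "adj E r v" and sep: "\<not> connected_in X (E - {{r, v}}) p r"
    using exists_separating_edge[OF t is_tree_connected_in[OF t p r]] rp by blast
  have vr: "adj E v r" using adj_commute[OF rv] .
  have swap: "{v, r} = {r, v}" by blast
  define V where "V = component X (E - {{r, v}}) r"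
  define W where "W = component X (E - {{r, v}}) v"
  have tV: "is_tree V (induced_edges E V)" using is_tree_split_component[OF t rv] unfolding V_def .
  have tW: "is_tree W (induced_edges E W)"
    using is_tree_split_component[OF t vr] unfolding swap W_def .
  have XV: "X - V = W" using split_tree_components_complement[OF t rv] unfolding V_def W_def .
  have E: "E = induced_edges E V \<union> induced_edges E W \<union> {{r, v}}"
    using split_tree_edges[OF t rv] unfolding V_def W_def .
  have rV: "r \<in> V" using r unfolding V_def by simp
  have pV: "p \<notin> V" using sep unfolding V_def by (auto dest: connected_in_sym)
  have vW: "v \<in> W" using graph_on_adj[OF is_tree_graph_on[OF t] rv] unfolding W_def by simp
  have "(V, (r, induced_edges E V), (v, p, induced_edges E W)) \<in> linkable_pairs X"
    using tV tW rV pV vW p XV unfolding rooted_trees_def doubly_rooted_trees_def rooted_tree_def V_def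
    by auto
  moreover have "(r, p, E) = link_trees (V, (r, induced_edges E V), (v, p, induced_edges E W))"
    unfolding link_trees_def using E by simp
  ultimately show ?thesis by (rule rev_image_eqI)
qed

lemma link_trees_image:
  "link_trees ` linkable_pairs X = {(r, p, E). rooted_tree X r E \<and> p \<in> X \<and> r \<noteq> p}"
proof
  show "link_trees ` linkable_pairs X \<subseteq> {(r, p, E). rooted_tree X r E \<and> p \<in> X \<and> r \<noteq> p}"
    by (rule image_subsetI) (rule link_trees_in)
  show "{(r, p, E). rooted_tree X r E \<and> p \<in> X \<and> r \<noteq> p} \<subseteq> link_trees ` linkable_pairs X"
  proof
    fix z assume "z \<in> {(r, p, E). rooted_tree X r E \<and> p \<in> X \<and> r \<noteq> p}"
    then obtain r p E where "z = (r, p, E)" "is_tree X E" "r \<in> X" "p \<in> X" "r \<noteq> p"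
      unfolding rooted_tree_def by auto
    then show "z \<in> link_trees ` linkable_pairs X"
      using link_trees_surj by simp
  qed
qed

lemma card_Sigma_times:
  assumes "finite I" and "\<And>i. i \<in> I \<Longrightarrow> finite (A i)" and "\<And>i. i \<in> I \<Longrightarrow> finite (B i)"
  shows "card (SIGMA i:I. A i \<times> B i) = (\<Sum>i\<in>I. card (A i) * card (B i))"
  using assms by (simp add: card_cartesian_product)

lemma card_doubly_rooted_trees:
  assumes fin: "finite X"
  shows "card (doubly_rooted_trees X) = card (rooted_trees X) +
           (\<Sum>V\<in>{V. V \<subseteq> X \<and> V \<noteq> {} \<and> V \<noteq> X}. card (rooted_trees V) * card (doubly_rooted_trees (X - V)))"
proof -
  define D0 where "D0 = (\<lambda>(r, E). (r, r, E)) ` rooted_trees X"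
  define D1 where "D1 = {(r, p, E). rooted_tree X r E \<and> p \<in> X \<and> r \<noteq> p}"
  have DT: "doubly_rooted_trees X = D0 \<union> D1"
  proof (intro equalityI subsetI)
    fix z assume "z \<in> doubly_rooted_trees X"
    then obtain r p E where z: "z = (r, p, E)" and "rooted_tree X r E" "p \<in> X"
      unfolding doubly_rooted_trees_def by auto
    then show "z \<in> D0 \<union> D1"
      unfolding D0_def D1_def rooted_trees_def by (cases "r = p") (auto intro: rev_image_eqI)
  next
    fix z assume "z \<in> D0 \<union> D1"
    then show "z \<in> doubly_rooted_trees X"
      unfolding D0_def D1_def doubly_rooted_trees_def rooted_trees_def rooted_tree_def by auto
  qed
  have "finite D0" "finite D1" using finite_doubly_rooted_trees[OF fin] unfolding DT by simp_all
  then have "card (D0 \<union> D1) = card D0 + card D1"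
    by (rule card_Un_disjoint) (auto simp: D0_def D1_def image_iff)
  moreover have "card D0 = card (rooted_trees X)"
    unfolding D0_def by (rule card_image) (auto simp: inj_on_def)
  moreover have "bij_betw link_trees (linkable_pairs X) D1"
    unfolding bij_betw_def D1_def by (simp add: inj_on_link_trees link_trees_image)
  then have "card D1 = card (linkable_pairs X)" by (rule bij_betw_same_card[symmetric])
  moreover have "finite V" if "V \<subseteq> X" for V using fin that by (rule finite_subset[rotated])
  then have "card (linkable_pairs X) =
      (\<Sum>V\<in>{V. V \<subseteq> X \<and> V \<noteq> {} \<and> V \<noteq> X}. card (rooted_trees V) * card (doubly_rooted_trees (X - V)))"
    using fin by (intro card_Sigma_times) (auto simp: finite_rooted_trees finite_doubly_rooted_trees)
  ultimately show ?thesis unfolding DT by simp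
qed

section \<open>Ordered forests\<close>

lemma disjoint_nth_Cons_iff:
  "(\<forall>i j. i < length (x # xs) \<longrightarrow> j < length (x # xs) \<longrightarrow> i \<noteq> j \<longrightarrow>
          f ((x # xs) ! i) \<inter> f ((x # xs) ! j) = {}) \<longleftrightarrow>
   (\<forall>y\<in>set xs. f x \<inter> f y = {}) \<and>
   (\<forall>i j. i < length xs \<longrightarrow> j < length xs \<longrightarrow> i \<noteq> j \<longrightarrow> f (xs ! i) \<inter> f (xs ! j) = {})"
  (is "?lhs \<longleftrightarrow> ?rhs")
proof
  assume lhs: ?lhs
  have "f x \<inter> f (xs ! j) = {}" if "j < length xs" for j using lhs[rule_format, of 0 "Suc j"] that by simp
  moreover have "f (xs ! i) \<inter> f (xs ! j) = {}" if "i < length xs" "j < length xs" "i \<noteq> j" for i j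
    using lhs[rule_format, of "Suc i" "Suc j"] that by simp
  ultimately show ?rhs by (metis in_set_conv_nth)
next
  assume rhs: ?rhs
  show ?lhs
  proof (intro allI impI)
    fix i j assume ij: "i < length (x # xs)" "j < length (x # xs)" "i \<noteq> j"
    then show "f ((x # xs) ! i) \<inter> f ((x # xs) ! j) = {}"
      using rhs by (cases i; cases j) (auto simp: Int_commute)
  qed
qed

lemma ordered_forest_Nil [simp]: "ordered_forest X [] \<longleftrightarrow> X = {}"
  unfolding ordered_forest_def by auto

lemma ordered_forest_Cons:
  "ordered_forest X ((V, r, E) # F) \<longleftrightarrow> rooted_tree V r E \<and> V \<subseteq> X \<and> ordered_forest (X - V) F"
  unfolding ordered_forest_def disjoint_nth_Cons_iff by auto

lemma rooted_tree_nonempty: "rooted_tree V r E \<Longrightarrow> V \<noteq> {}"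
  unfolding rooted_tree_def by blast

lemma ordered_forests_empty: "ordered_forests {} = {[]}"
proof -
  have "\<not> ordered_forest {} (T # F)" for T :: "'a set \<times> 'a \<times> 'a set set" and F
    by (cases T) (auto simp: ordered_forest_Cons dest: rooted_tree_nonempty)
  then have "ordered_forest {} F \<longleftrightarrow> F = []" for F :: "('a set \<times> 'a \<times> 'a set set) list"
    by (cases F) auto
  then show ?thesis unfolding ordered_forests_def by auto
qed

text \<open>The trees of an ordered forest are nonempty and pairwise disjoint, hence distinct.\<close>
lemma finite_ordered_forests:
  assumes "finite X"
  shows "finite (ordered_forests X)"
proof -
  let ?S = "Pow X \<times> X \<times> Pow (Pow X)"
  have "set F \<subseteq> ?S \<and> distinct F" if F: "ordered_forest X F" for F
  proof
    show "set F \<subseteq> ?S"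
    proof
      fix T assume T: "T \<in> set F"
      obtain V r E where T_def: "T = (V, r, E)" by (cases T)
      then have "rooted_tree V r E" "V \<subseteq> X" using F T unfolding ordered_forest_def by auto
      then show "T \<in> ?S"
        using graph_on_edge_subset[OF is_tree_graph_on] unfolding T_def rooted_tree_def by blast
    qed
    show "distinct F"
      unfolding distinct_conv_nth
    proof (intro allI impI)
      fix i j assume ij: "i < length F" "j < length F" "i \<noteq> j"
      then have "fst (F ! i) \<inter> fst (F ! j) = {}" using F unfolding ordered_forest_def by blast
      moreover obtain V r E where "F ! i = (V, r, E)" by (cases "F ! i")
      then have "fst (F ! i) \<noteq> {}"
        using F nth_mem[OF ij(1)] rooted_tree_nonempty unfolding ordered_forest_def by fastforce
      ultimately show "F ! i \<noteq> F ! j" by auto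
    qed
  qed
  then have "ordered_forests X \<subseteq> {F. set F \<subseteq> ?S \<and> distinct F}"
    unfolding ordered_forests_def by blast
  moreover have "finite {F. set F \<subseteq> ?S \<and> distinct F}"
    using assms by (intro finite_subset_distinct) simp
  ultimately show ?thesis by (rule finite_subset)
qed

lemma bij_betw_Cons_ordered_forests:
  assumes "X \<noteq> {}"
  shows "bij_betw (\<lambda>(V, (r, E), F). (V, r, E) # F)
           (SIGMA V:{V. V \<subseteq> X \<and> V \<noteq> {}}. rooted_trees V \<times> ordered_forests (X - V))
           (ordered_forests X)"
proof -
  let ?cons = "\<lambda>(V, (r, E), F). (V, r, E) # F"
    and ?S = "SIGMA V:{V. V \<subseteq> X \<and> V \<noteq> {}}. rooted_trees V \<times> ordered_forests (X - V)"
  have "inj_on ?cons ?S" by (auto simp: inj_on_def)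
  moreover have "?cons ` ?S \<subseteq> ordered_forests X"
    by (auto simp: ordered_forests_def rooted_trees_def ordered_forest_Cons)
  moreover have "ordered_forests X \<subseteq> ?cons ` ?S"
  proof
    fix F assume F: "F \<in> ordered_forests X"
    then obtain V r E F' where F_def: "F = (V, r, E) # F'"
      using assms by (cases F) (auto simp: ordered_forests_def)
    then have "rooted_tree V r E" "V \<subseteq> X" "ordered_forest (X - V) F'"
      using F by (simp_all add: ordered_forests_def ordered_forest_Cons)
    then have "(V, (r, E), F') \<in> ?S"
      by (auto simp: rooted_trees_def ordered_forests_def dest: rooted_tree_nonempty)
    then show "F \<in> ?cons ` ?S" unfolding F_def by (rule rev_image_eqI) simp
  qed
  ultimately show ?thesis unfolding bij_betw_def by blast
qed

lemma card_ordered_forests: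
  assumes fin: "finite X" and ne: "X \<noteq> {}"
  shows "card (ordered_forests X) =
           (\<Sum>V\<in>{V. V \<subseteq> X \<and> V \<noteq> {}}. card (rooted_trees V) * card (ordered_forests (X - V)))"
proof -
  have "finite V" if "V \<subseteq> X" for V using fin that by (rule finite_subset[rotated])
  then have "card (SIGMA V:{V. V \<subseteq> X \<and> V \<noteq> {}}. rooted_trees V \<times> ordered_forests (X - V)) =
      (\<Sum>V\<in>{V. V \<subseteq> X \<and> V \<noteq> {}}. card (rooted_trees V) * card (ordered_forests (X - V)))"
    using fin by (intro card_Sigma_times) (auto simp: finite_rooted_trees finite_ordered_forests)
  then show ?thesis using bij_betw_same_card[OF bij_betw_Cons_ordered_forests[OF ne]] by simp
qed

lemma subset_recurrence_unique:
  fixes f g :: "'a set \<Rightarrow> 'b::semiring_0"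
  assumes "finite X" and "f {} = g {}"
    and f: "\<And>Y. finite Y \<Longrightarrow> Y \<noteq> {} \<Longrightarrow> f Y = (\<Sum>V\<in>{V. V \<subseteq> Y \<and> V \<noteq> {}}. w V * f (Y - V))"
    and g: "\<And>Y. finite Y \<Longrightarrow> Y \<noteq> {} \<Longrightarrow> g Y = (\<Sum>V\<in>{V. V \<subseteq> Y \<and> V \<noteq> {}}. w V * g (Y - V))"
  shows "f X = g X"
  using \<open>finite X\<close>
proof (induction X rule: finite_psubset_induct)
  case (psubset Y)
  show ?case
  proof (cases "Y = {}")
    case False
    have "f (Y - V) = g (Y - V)" if "V \<subseteq> Y" "V \<noteq> {}" for V
      using psubset.IH[of "Y - V"] that by blast
    then show ?thesis using f[OF psubset.hyps False] g[OF psubset.hyps False] by simp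
  qed (simp add: \<open>f {} = g {}\<close>)
qed

lemma card_ordered_forests_eq_doubly_rooted_trees:
  assumes "finite X" and "X \<noteq> {}"
  shows "card (ordered_forests X) = card (doubly_rooted_trees X)"
proof -
  \<comment> \<open>with \<open>g {} = 1\<close> the summand \<open>V = Y\<close> of the forest recurrence is \<open>card (rooted_trees Y)\<close>\<close>
  define g where "g Y = (if Y = {} then 1 else card (doubly_rooted_trees Y))" for Y :: "'a set"
  have g_rec: "g Y = (\<Sum>V\<in>{V. V \<subseteq> Y \<and> V \<noteq> {}}. card (rooted_trees V) * g (Y - V))"
    if Y: "finite Y" "Y \<noteq> {}" for Y
  proof -
    have "{V. V \<subseteq> Y \<and> V \<noteq> {}} = insert Y {V. V \<subseteq> Y \<and> V \<noteq> {} \<and> V \<noteq> Y}" using Y by auto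
    moreover have "finite {V. V \<subseteq> Y \<and> V \<noteq> {} \<and> V \<noteq> Y}" using Y by simp
    moreover have "g (Y - V) = card (doubly_rooted_trees (Y - V))"
      if "V \<in> {V. V \<subseteq> Y \<and> V \<noteq> {} \<and> V \<noteq> Y}" for V
      using that unfolding g_def by auto
    ultimately show ?thesis using card_doubly_rooted_trees[OF Y(1)] Y(2) by (simp add: g_def)
  qed
  have "card (ordered_forests {}) = g {}" by (simp add: g_def ordered_forests_empty)
  from subset_recurrence_unique[OF \<open>finite X\<close> this card_ordered_forests g_rec]
  have "card (ordered_forests X) = g X" .
  then show ?thesis using assms(2) by (simp add: g_def)
qed

section \<open>Trees in which a given vertex is a leaf\<close>

definition attach_leaf :: "'a \<Rightarrow> 'a \<times> 'a \<times> 'a set set \<Rightarrow> 'a \<times> 'a set set" where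
  "attach_leaf a = (\<lambda>(r, p, E). (r, E \<union> {{p, a}}))"

lemma is_leaf_root_singleton:
  assumes t: "is_tree A E" and leaf: "is_leaf A r E r"
  shows "A = {r}"
proof (rule ccontr)
  assume "A \<noteq> {r}"
  moreover have r: "r \<in> A" using leaf unfolding is_leaf_def by blast
  ultimately obtain w where w: "w \<in> A" "r \<noteq> w" by blast
  then obtain q where q: "q \<in> A" "adj E r q"
    using connected_in_first_edge[OF is_tree_connected_in[OF t r w(1)]] by blast
  have qr: "adj E q r" using adj_commute[OF q(2)] .
  then have "is_child A r E q r" using is_tree_edge_bridge[OF t qr] unfolding is_child_def by blast
  then show False using leaf q(1) unfolding is_leaf_def by blast
qed

text \<open>If \<open>q\<close> were not a child of \<open>a\<close>, it would reach \<open>r\<close>, hence \<open>p\<close> and then \<open>a\<close>, without the edge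
  \<open>{q, a}\<close>.\<close>
lemma other_neighbour_is_child:
  assumes t: "is_tree A E" and r: "r \<in> A" and ap: "adj E a p"
    and sep: "\<not> connected_in A (E - {{a, p}}) r a" and aq: "adj E a q" and qp: "q \<noteq> p"
  shows "is_child A r E q a"
  unfolding is_child_def
proof (intro conjI notI)
  show "adj E q a" using adj_commute[OF aq] .
  assume qr: "connected_in A (E - {{q, a}}) q r"
  have pa: "adj E p a" using adj_commute[OF ap] .
  have swap: "{p, a} = {a, p}" by blast
  define C where "C = component A (E - {{a, p}}) p"
  have "connected_in A (E - {{a, p}}) p r"
    using split_tree_components_cover[OF t pa r] sep unfolding swap by (metis connected_in_sym)
  then have "connected_in C (induced_edges (E - {{a, p}}) C) p r"
    unfolding C_def by (rule connected_in_component)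
  moreover have "C \<subseteq> A" unfolding C_def by blast
  moreover have "a \<notin> C"
    using split_tree_components_disjoint[OF t ap connected_in_refl] unfolding C_def by blast
  then have "induced_edges (E - {{a, p}}) C \<subseteq> E - {{q, a}}" by blast
  ultimately have pr: "connected_in A (E - {{q, a}}) p r" by (rule connected_in_mono)
  have "{p, a} \<noteq> {q, a}" using qp ap by (auto simp: adj_def doubleton_eq_iff)
  then have "adj (E - {{q, a}}) p a" using pa by (auto simp: adj_def)
  then have "connected_in A (E - {{q, a}}) p a"
    using graph_on_adj[OF is_tree_graph_on[OF t] ap] by (auto intro: connected_in_adj)
  then have "connected_in A (E - {{q, a}}) q a"
    by (rule connected_in_trans[OF connected_in_trans[OF qr connected_in_sym[OF pr]]])
  then show False using is_tree_edge_bridge[OF t adj_commute[OF aq]] by blast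
qed

lemma attach_leaf_in_rooted_trees_leaf:
  assumes a: "a \<in> A" and z: "z \<in> doubly_rooted_trees (A - {a})"
  shows "attach_leaf a z \<in> rooted_trees_leaf A a"
proof -
  obtain r p E where z_def: "z = (r, p, E)" by (cases z)
  have t: "is_tree (A - {a}) E" and r: "r \<in> A - {a}" and p: "p \<in> A - {a}"
    using z unfolding z_def doubly_rooted_trees_def rooted_tree_def by auto
  have "is_tree ((A - {a}) \<union> {a}) (E \<union> {} \<union> {{p, a}})"
    using is_tree_join[OF t is_tree_singleton[of a] _ p singletonI] by simp
  moreover have "(A - {a}) \<union> {a} = A" using a by auto
  ultimately have tA: "is_tree A (E \<union> {{p, a}})" by simp
  have aE: "{u, a} \<notin> E" for u using graph_on_edge_subset[OF is_tree_graph_on[OF t], of "{u, a}"] by blast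
  have "\<not> is_child A r (E \<union> {{p, a}}) u a" for u
  proof
    assume child: "is_child A r (E \<union> {{p, a}}) u a"
    then have "{u, a} = {p, a}" "u \<noteq> a" using aE unfolding is_child_def adj_def by auto
    then have up: "u = p" by (auto simp: doubleton_eq_iff)
    have "connected_in (A - {a}) E p r" using is_tree_connected_in[OF t p r] .
    then have "connected_in A (E \<union> {{p, a}} - {{p, a}}) p r"
      by (rule connected_in_mono) (use aE in auto)
    then show False using child up unfolding is_child_def by blast
  qed
  then show ?thesis
    using tA r a unfolding z_def attach_leaf_def rooted_trees_leaf_def rooted_tree_def is_leaf_def by auto
qed

lemma inj_on_attach_leaf: "inj_on (attach_leaf a) (doubly_rooted_trees (A - {a}))"
proof (rule inj_onI)
  fix z z' assume z: "z \<in> doubly_rooted_trees (A - {a})" and z': "z' \<in> doubly_rooted_trees (A - {a})"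
    and eq: "attach_leaf a z = attach_leaf a z'"
  obtain r p E where z_def: "z = (r, p, E)" by (cases z)
  obtain r' p' E' where z'_def: "z' = (r', p', E')" by (cases z')
  have t: "is_tree (A - {a}) E" and p: "p \<in> A - {a}"
    using z unfolding z_def doubly_rooted_trees_def rooted_tree_def by auto
  have t': "is_tree (A - {a}) E'"
    using z' unfolding z'_def doubly_rooted_trees_def rooted_tree_def by auto
  have rr: "r = r'" and EE: "E \<union> {{p, a}} = E' \<union> {{p', a}}"
    using eq unfolding z_def z'_def attach_leaf_def by simp_all
  have aE: "{u, a} \<notin> E" and aE': "{u, a} \<notin> E'" for u
    using graph_on_edge_subset[OF is_tree_graph_on[OF t], of "{u, a}"]
      graph_on_edge_subset[OF is_tree_graph_on[OF t'], of "{u, a}"] by blast+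
  have "{p, a} = {p', a}" using EE aE' by blast
  then have pp: "p = p'" using p by (auto simp: doubleton_eq_iff)
  have "E = E \<union> {{p, a}} - {{p, a}}" using aE by blast
  also have "\<dots> = E'" using EE aE' unfolding pp by blast
  finally show "z = z'" unfolding z_def z'_def using rr pp by simp
qed

lemma attach_leaf_surj:
  assumes a: "a \<in> A" and other: "A - {a} \<noteq> {}" and z: "z \<in> rooted_trees_leaf A a"
  shows "z \<in> attach_leaf a ` doubly_rooted_trees (A - {a})"
proof -
  obtain r E where z_def: "z = (r, E)" by (cases z)
  have t: "is_tree A E" and r: "r \<in> A" and leaf: "is_leaf A r E a"
    using z unfolding z_def rooted_trees_leaf_def rooted_tree_def by auto
  have "r \<noteq> a"
  proof
    assume "r = a"
    then have "A = {a}" using is_leaf_root_singleton[OF t] leaf by simp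
    then show False using other by simp
  qed
  then obtain p where ap: "adj E a p" and sep: "\<not> connected_in A (E - {{a, p}}) r a"
    using exists_separating_edge[OF t is_tree_connected_in[OF t r a]] by blast
  have only_p: "q = p" if "adj E a q" for q
    using other_neighbour_is_child[OF t r ap sep that] leaf graph_on_adj[OF is_tree_graph_on[OF t] that]
    unfolding is_leaf_def by blast
  define C where "C = component A (E - {{a, p}}) p"
  have pa: "adj E p a" using adj_commute[OF ap] .
  have swap: "{p, a} = {a, p}" by blast
  have Ca: "component A (E - {{a, p}}) a = {a}" using component_without_only_edge[OF a only_p] .
  then have CA: "C = A - {a}" using split_tree_components_complement[OF t ap] unfolding C_def by simp
  have "\<not> f \<subseteq> {a}" if "f \<in> E" for f
    using graph_on_edgeE[OF is_tree_graph_on[OF t] that] by (metis insert_subset singletonD)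
  then have no_loop: "induced_edges E {a} = {}" by blast
  have "E = induced_edges E C \<union> {{p, a}}"
    using split_tree_edges[OF t ap] no_loop unfolding Ca C_def swap by simp
  then have "z = attach_leaf a (r, p, induced_edges E C)" unfolding z_def attach_leaf_def by simp
  moreover have "is_tree C (induced_edges E C)"
    using is_tree_split_component[OF t pa] unfolding swap C_def .
  moreover have "p \<in> C" using graph_on_adj[OF is_tree_graph_on[OF t] ap] unfolding C_def by simp
  ultimately show ?thesis
    using r \<open>r \<noteq> a\<close> unfolding CA doubly_rooted_trees_def rooted_tree_def by auto
qed

lemma bij_betw_attach_leaf:
  assumes "a \<in> A" and "A - {a} \<noteq> {}"
  shows "bij_betw (attach_leaf a) (doubly_rooted_trees (A - {a})) (rooted_trees_leaf A a)"
  unfolding bij_betw_def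
proof
  show "inj_on (attach_leaf a) (doubly_rooted_trees (A - {a}))" by (rule inj_on_attach_leaf)
  show "attach_leaf a ` doubly_rooted_trees (A - {a}) = rooted_trees_leaf A a"
    using attach_leaf_in_rooted_trees_leaf[OF assms(1)] attach_leaf_surj[OF assms] by blast
qed

lemma rooted_trees_leaf_singleton: "rooted_trees_leaf {a} a = {(a, {})}"
proof -
  have "E = {}" if t: "is_tree {a} E" for E :: "'a set set"
  proof -
    have False if f: "f \<in> E" for f
    proof -
      obtain x y where "x \<in> {a}" "y \<in> {a}" "x \<noteq> y"
        using graph_on_edgeE[OF is_tree_graph_on[OF t] f] by blast
      then show False by simp
    qed
    then show ?thesis by blast
  qed
  moreover have "is_leaf {a} a {} a" unfolding is_leaf_def is_child_def adj_def by simp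
  ultimately show ?thesis
    using is_tree_singleton unfolding rooted_trees_leaf_def rooted_tree_def by auto
qed

theorem ex_bij_rooted_trees_leaf_ordered_forests:
  assumes fin: "finite A" and a: "a \<in> A"
  shows "\<exists>\<rho>. bij_betw \<rho> (rooted_trees_leaf A a) (ordered_forests (A - {a}))"
proof (cases "A - {a} = {}")
  case True
  then have "A = {a}" using a by blast
  then have "rooted_trees_leaf A a = {(a, {})}" "ordered_forests (A - {a}) = {[]}"
    by (simp_all add: rooted_trees_leaf_singleton ordered_forests_empty)
  then show ?thesis by (intro finite_same_card_bij) simp_all
next
  case False
  have fin': "finite (A - {a})" using fin by simp
  have bij: "bij_betw (attach_leaf a) (doubly_rooted_trees (A - {a})) (rooted_trees_leaf A a)"
    using bij_betw_attach_leaf[OF a False] .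
  have "card (rooted_trees_leaf A a) = card (ordered_forests (A - {a}))"
    using bij_betw_same_card[OF bij] card_ordered_forests_eq_doubly_rooted_trees[OF fin' False] by simp
  moreover have "finite (rooted_trees_leaf A a)"
    using bij_betw_finite[OF bij] finite_doubly_rooted_trees[OF fin'] by blast
  ultimately show ?thesis using finite_ordered_forests[OF fin'] by (intro finite_same_card_bij)
qed

theorem lemma2p2:
  fixes n :: nat and A :: "nat set"
  assumes "A \<subseteq> {1..n}" and "A \<noteq> {}"
  shows "\<exists>\<rho>. bij_betw \<rho> (rooted_trees_leaf A (Max A)) (ordered_forests (A - {Max A}))"
proof -
  have "finite A" using assms(1) by (rule finite_subset) simp
  then show ?thesis
    using ex_bij_rooted_trees_leaf_ordered_forests[OF _ Max_in] assms(2) by blast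
qed

end
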